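(* Let $c\ge 1$, let $n\ge 9$, and let $\bar q$ be a positive integer divisible by $8$ with $\bar q\le 4\sqrt n$. Consider a sequence of coordinates $k_1,k_2,\dots$, each chosen independently and uniformly at random from $\{1,\dots,n\}$, and let $I$ be any block of $\bar q/4$ consecutive terms of it. Then with probability at least $1-\frac13 n^{-2c}$, there are at most $b_3=1+\ln 3+2c\ln n$ reappearing coordinates among the terms of $I$.
   Context: A term of the block is reappearing if the same coordinate already occurs at an earlier position within the block. *)

theory Defs
  imports "HOL-Probability.Probability"
begin

text \<open>The random coordinate sequence k_1, k_2, ... (indexed from 0 here):
  infinite product of independent uniform distributions on {1..n}.\<close>
definition coord_seq_space :: "nat \<Rightarrow> (nat \<Rightarrow> nat) measure" where
  "coord_seq_space n = PiM UNIV (\<lambda>_. measure_pmf (pmf_of_set {1..n}))"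

definition reappearing_count :: "(nat \<Rightarrow> nat) \<Rightarrow> nat \<Rightarrow> nat \<Rightarrow> nat" where
  "reappearing_count k s m = card {j \<in> {s..<s+m}. \<exists>i\<in>{s..<j}. k i = k j}"

end

theory Submission
  imports Defs
begin

(* A block of m terms with at least r reappearing terms is determined by a choice of r reappearing
  positions, for each of them the first position of the block carrying the same coordinate (which is
  not reappearing), and the coordinates at the other m - r positions. Hence at most
  (m choose r) m^r n^(m-r) <= n^m / r! of the n^m equally likely blocks have r reappearing terms
  once m^2 <= n, and 1/r! <= e^(1-b) = n^(-2c)/3 for r = floor b + 1, b = 1 + ln 3 + 2c ln n. *)

lemma reappearing_count_restrict:
  "reappearing_count (restrict k {s..<s+m}) s m = reappearing_count k s m"
  unfolding reappearing_count_def by (intro arg_cong[where f = card]) auto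

lemma reappearing_count_ge_obtain:
  assumes "r \<le> reappearing_count f s m"
  obtains J g where "J \<subseteq> {s..<s+m}" "card J = r" "g \<in> J \<rightarrow> {s..<s+m} - J"
    "\<forall>j\<in>J. f j = f (g j)"
proof -
  define B where "B = {s..<s+m}"
  define first where "first j = Min {i \<in> B. f i = f j}" for j
  obtain J where J: "J \<subseteq> {j \<in> B. \<exists>i\<in>{s..<j}. f i = f j}" "card J = r"
    using obtain_subset_with_card_n assms unfolding reappearing_count_def B_def by blast
  have "first j \<in> B - J \<and> f (first j) = f j" if "j \<in> J" for j
  proof -
    let ?T = "{i \<in> B. f i = f j}"
    have "finite ?T" "j \<in> ?T" using that J by (auto simp: B_def)
    then have first: "first j \<in> ?T" "\<And>i. i \<in> ?T \<Longrightarrow> first j \<le> i"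
      unfolding first_def using Min_in Min_le by blast+
    have "first j \<notin> J"
    proof
      assume "first j \<in> J"
      then obtain i where "i \<in> {s..<first j}" "f i = f (first j)" using J by blast
      with first show False unfolding B_def by fastforce
    qed
    with first show ?thesis by blast
  qed
  with J show thesis by (intro that[of J first]) (auto simp: B_def)
qed

lemma card_PiE_agreeing_le:
  assumes "finite B" "finite A" "J \<subseteq> B" "g \<in> J \<rightarrow> B - J"
  shows "card {f \<in> B \<rightarrow>\<^sub>E A. \<forall>j\<in>J. f j = f (g j)} \<le> card A ^ (card B - card J)"
proof -
  let ?F = "{f \<in> B \<rightarrow>\<^sub>E A. \<forall>j\<in>J. f j = f (g j)}"
  have "inj_on (\<lambda>f. restrict f (B - J)) ?F"
  proof (rule inj_onI)
    fix f1 f2 assume f1: "f1 \<in> ?F" and f2: "f2 \<in> ?F"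
      and eq: "restrict f1 (B - J) = restrict f2 (B - J)"
    have agree: "f1 i = f2 i" if "i \<in> B - J" for i
      using that eq by (metis restrict_apply')
    have "f1 i = f2 i" if "i \<in> B" for i
    proof (cases "i \<in> J")
      case True
      then have "g i \<in> B - J" using assms(4) by auto
      moreover have "f1 i = f1 (g i)" "f2 i = f2 (g i)" using True f1 f2 by blast+
      ultimately show ?thesis using agree by metis
    qed (use that agree in blast)
    moreover have "f1 \<in> B \<rightarrow>\<^sub>E A" "f2 \<in> B \<rightarrow>\<^sub>E A" using f1 f2 by blast+
    ultimately show "f1 = f2" by (metis PiE_ext)
  qed
  moreover have "(\<lambda>f. restrict f (B - J)) ` ?F \<subseteq> (B - J) \<rightarrow>\<^sub>E A" by auto
  moreover have "finite ((B - J) \<rightarrow>\<^sub>E A)" using assms by (simp add: finite_PiE)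
  ultimately have "card ?F \<le> card ((B - J) \<rightarrow>\<^sub>E A)" by (rule card_inj_on_le)
  also have "\<dots> = card A ^ (card B - card J)"
    using assms by (simp add: card_PiE card_Diff_subset finite_subset)
  finally show ?thesis .
qed

lemma card_reappearing_count_ge:
  assumes "finite A"
  shows "card {f \<in> {s..<s+m} \<rightarrow>\<^sub>E A. r \<le> reappearing_count f s m}
           \<le> (m choose r) * m ^ r * card A ^ (m - r)"
proof -
  define B where "B = {s..<s+m}"
  define F where "F J g = {f \<in> B \<rightarrow>\<^sub>E A. \<forall>j\<in>J. f j = f (g j)}" for J g
  define Js where "Js = {J. J \<subseteq> B \<and> card J = r}"
  have B: "finite B" "card B = m" unfolding B_def by auto
  have "{f \<in> B \<rightarrow>\<^sub>E A. r \<le> reappearing_count f s m} \<subseteq> (\<Union>J\<in>Js. \<Union>g\<in>J \<rightarrow>\<^sub>E B - J. F J g)"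
  proof
    fix f assume f: "f \<in> {f \<in> B \<rightarrow>\<^sub>E A. r \<le> reappearing_count f s m}"
    then obtain J g where "J \<subseteq> B" "card J = r" "g \<in> J \<rightarrow> B - J" "\<forall>j\<in>J. f j = f (g j)"
      using reappearing_count_ge_obtain unfolding B_def by blast
    with f show "f \<in> (\<Union>J\<in>Js. \<Union>g\<in>J \<rightarrow>\<^sub>E B - J. F J g)"
      unfolding Js_def F_def by (intro UN_I[of J] UN_I[of "restrict g J"]) auto
  qed
  moreover have fin: "finite (J \<rightarrow>\<^sub>E B - J)" if "J \<in> Js" for J
    using that B unfolding Js_def by (intro finite_PiE) (auto intro: finite_subset)
  moreover have "finite (F J g)" for J g
    using B assms by (simp add: F_def finite_PiE)
  moreover have "finite Js" unfolding Js_def using B by auto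
  ultimately have "card {f \<in> B \<rightarrow>\<^sub>E A. r \<le> reappearing_count f s m}
      \<le> card (\<Union>J\<in>Js. \<Union>g\<in>J \<rightarrow>\<^sub>E B - J. F J g)"
    by (intro card_mono) auto
  also have "\<dots> \<le> (\<Sum>J\<in>Js. card (\<Union>g\<in>J \<rightarrow>\<^sub>E B - J. F J g))" by (rule card_UN_le) fact
  also have "\<dots> \<le> (\<Sum>J\<in>Js. m ^ r * card A ^ (m - r))"
  proof (rule sum_mono)
    fix J assume J: "J \<in> Js"
    then have J_sub: "J \<subseteq> B" and card_J: "card J = r" unfolding Js_def by auto
    have "card (\<Union>g\<in>J \<rightarrow>\<^sub>E B - J. F J g) \<le> (\<Sum>g\<in>J \<rightarrow>\<^sub>E B - J. card (F J g))"
      using fin[OF J] by (rule card_UN_le)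
    also have "\<dots> \<le> (\<Sum>g\<in>J \<rightarrow>\<^sub>E B - J. card A ^ (m - r))"
      using B J_sub card_J assms
      by (intro sum_mono) (auto simp: F_def intro: card_PiE_agreeing_le)
    also have "\<dots> = (m - r) ^ r * card A ^ (m - r)"
      using B J_sub card_J by (simp add: card_PiE card_Diff_subset finite_subset)
    also have "\<dots> \<le> m ^ r * card A ^ (m - r)" by (simp add: power_mono)
    finally show "card (\<Union>g\<in>J \<rightarrow>\<^sub>E B - J. F J g) \<le> m ^ r * card A ^ (m - r)" .
  qed
  also have "\<dots> = card Js * (m ^ r * card A ^ (m - r))" by simp
  also have "card Js = m choose r" using n_subsets[OF B(1), of r] B(2) by (simp add: Js_def)
  finally show ?thesis by (simp add: B_def mult.assoc)
qed

lemma card_reappearing_count_ge_mult_fact: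
  assumes "finite A" "m * m \<le> card A"
  shows "card {f \<in> {s..<s+m} \<rightarrow>\<^sub>E A. r \<le> reappearing_count f s m} * fact r \<le> card A ^ m"
proof (cases "r \<le> m")
  case False
  then show ?thesis
    using card_reappearing_count_ge[OF assms(1), of s m r] by (simp add: binomial_eq_0)
next
  case True
  have "card {f \<in> {s..<s+m} \<rightarrow>\<^sub>E A. r \<le> reappearing_count f s m} * fact r
      \<le> (m choose r) * fact r * m ^ r * card A ^ (m - r)"
    using card_reappearing_count_ge[OF assms(1), of s m r] by (simp add: mult_ac)
  also have "\<dots> \<le> m ^ r * m ^ r * card A ^ (m - r)"
    using binomial_fact_pow[of m r] by (intro mult_right_mono) auto
  also have "\<dots> \<le> card A ^ r * card A ^ (m - r)"
    using assms(2) by (intro mult_right_mono) (simp_all add: power_mono flip: power_mult_distrib)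
  also have "\<dots> = card A ^ m" using True by (simp flip: power_add)
  finally show ?thesis .
qed

lemma sets_PiM_discrete_countable:
  fixes M :: "'i \<Rightarrow> 'a::countable measure"
  assumes "finite B" "\<And>i. sets (M i) = UNIV" "X \<subseteq> B \<rightarrow>\<^sub>E UNIV"
  shows "X \<in> sets (PiM B M)"
proof (rule sets.countable)
  fix f assume "f \<in> X"
  then have "{f} = Pi\<^sub>E B (\<lambda>i. {f i})"
    using assms(3) by (force simp: PiE_iff extensional_def)
  then show "{f} \<in> sets (PiM B M)" using assms(1,2) by (simp add: sets_PiM_I_finite)
next
  show "countable X"
    using assms(1,3) countable_PiE[of B "\<lambda>_. UNIV :: 'a set"] countable_subset by blast
qed

lemma measure_PiM_pmf_of_set:
  fixes A :: "'a::countable set"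
  assumes "finite B" "finite A" "A \<noteq> {}" "X \<subseteq> B \<rightarrow>\<^sub>E UNIV"
  shows "measure (PiM B (\<lambda>_. measure_pmf (pmf_of_set A))) X
           = card (X \<inter> (B \<rightarrow>\<^sub>E A)) / real (card A) ^ card B"
proof -
  let ?M = "\<lambda>_::'i. measure_pmf (pmf_of_set A)"
  interpret product_prob_space ?M B by unfold_locales
  have sets: "Y \<in> sets (PiM B ?M)" if "Y \<subseteq> B \<rightarrow>\<^sub>E UNIV" for Y
    using assms(1) that by (intro sets_PiM_discrete_countable) auto
  have "AE f in PiM B ?M. \<forall>i\<in>B. f i \<in> A"
    using assms(1) by (intro eventually_ball_finite ballI AE_PiM_component)
      (auto simp: AE_measure_pmf_iff assms prob_space_measure_pmf)
  then have "AE f in PiM B ?M. f \<in> X \<longleftrightarrow> f \<in> X \<inter> (B \<rightarrow>\<^sub>E A)"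
    using AE_space[of "PiM B ?M"] by eventually_elim (auto simp: space_PiM)
  then have "measure (PiM B ?M) X = measure (PiM B ?M) (X \<inter> (B \<rightarrow>\<^sub>E A))"
    using assms(4) by (intro measure_eq_AE sets) auto
  also have "\<dots> = (\<Sum>f\<in>X \<inter> (B \<rightarrow>\<^sub>E A). measure (PiM B ?M) {f})"
    using assms(1,2,4) by (intro finite_measure_eq_sum_singleton sets) (auto simp: finite_PiE)
  also have "\<dots> = (\<Sum>f\<in>X \<inter> (B \<rightarrow>\<^sub>E A). (1 / card A) ^ card B)"
  proof (rule sum.cong[OF refl])
    fix f assume f: "f \<in> X \<inter> (B \<rightarrow>\<^sub>E A)"
    then have "{f} = Pi\<^sub>E B (\<lambda>i. {f i})" by (force simp: PiE_iff extensional_def)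
    then have "emeasure (PiM B ?M) {f} = (\<Prod>i\<in>B. emeasure (?M i) {f i})"
      using assms(1) by (simp add: emeasure_PiM)
    also have "\<dots> = (\<Prod>i\<in>B. ennreal (1 / card A))"
    proof (rule prod.cong[OF refl])
      fix i assume "i \<in> B"
      then have "A \<inter> {f i} = {f i}" using f by auto
      then show "emeasure (?M i) {f i} = ennreal (1 / card A)"
        using assms(2,3) by (simp add: measure_pmf.emeasure_eq_measure measure_pmf_of_set)
    qed
    finally show "measure (PiM B ?M) {f} = (1 / card A) ^ card B"
      by (simp add: P.emeasure_eq_measure prod_ennreal ennreal_power)
  qed
  finally show ?thesis by (simp add: power_divide)
qed

lemma measure_coord_seq_space_restrict:
  assumes "finite B" "n > 0"
  shows "measure (coord_seq_space n) {k \<in> space (coord_seq_space n). P (restrict k B)}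
           = card {f \<in> B \<rightarrow>\<^sub>E {1..n}. P f} / real n ^ card B"
proof -
  let ?M = "\<lambda>_::nat. measure_pmf (pmf_of_set {1..n})"
  interpret product_prob_space ?M UNIV by unfold_locales
  let ?Y = "{f \<in> B \<rightarrow>\<^sub>E UNIV. P f}"
  have "{k \<in> space (PiM UNIV ?M). P (restrict k B)} = (\<lambda>k. restrict k B) -` ?Y \<inter> space (PiM UNIV ?M)"
    by auto
  then have "measure (PiM UNIV ?M) {k \<in> space (PiM UNIV ?M). P (restrict k B)}
      = measure (distr (PiM UNIV ?M) (PiM B ?M) (\<lambda>k. restrict k B)) ?Y"
    using assms(1) by (simp only:)
      (intro measure_distr[symmetric] measurable_restrict_subset sets_PiM_discrete_countable, auto)
  also have "\<dots> = measure (PiM B ?M) ?Y" using assms(1) by (subst distr_PiM_restrict_finite) auto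
  also have "\<dots> = card (?Y \<inter> (B \<rightarrow>\<^sub>E {1..n})) / real (card {1..n}) ^ card B"
    using assms by (intro measure_PiM_pmf_of_set) auto
  also have "?Y \<inter> (B \<rightarrow>\<^sub>E {1..n}) = {f \<in> B \<rightarrow>\<^sub>E {1..n}. P f}" by auto
  also have "card {1..n} = n" by simp
  finally show ?thesis unfolding coord_seq_space_def .
qed

lemma prob_reappearing_count_less:
  assumes "n > 0" "m * m \<le> n"
  shows "measure (coord_seq_space n) {k \<in> space (coord_seq_space n). reappearing_count k s m < r}
           \<ge> 1 - 1 / fact r"
proof -
  let ?B = "{s..<s+m}"
  let ?S = "?B \<rightarrow>\<^sub>E {1..n}"
  let ?bad = "{f \<in> ?S. r \<le> reappearing_count f s m}"
  have card_S: "card ?S = n ^ m" by (simp add: card_PiE)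
  have bad_le: "card ?bad \<le> n ^ m"
    unfolding card_S[symmetric] by (intro card_mono finite_PiE) auto
  have "card ?bad * fact r \<le> n ^ m"
    using card_reappearing_count_ge_mult_fact[of "{1..n}" m s r] assms(2) by simp
  then have "real (card ?bad) * fact r \<le> real n ^ m"
    by (metis of_nat_fact of_nat_le_iff of_nat_mult of_nat_power)
  then have "real (card ?bad) / real n ^ m \<le> 1 / fact r"
    using assms(1) by (simp add: field_simps)
  moreover have "{f \<in> ?S. reappearing_count f s m < r} = ?S - ?bad" by auto
  then have "card {f \<in> ?S. reappearing_count f s m < r} = n ^ m - card ?bad"
    using card_S by (simp add: card_Diff_subset finite_PiE)
  then have "measure (coord_seq_space n) {k \<in> space (coord_seq_space n). reappearing_count k s m < r}
      = 1 - real (card ?bad) / real n ^ m"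
    using measure_coord_seq_space_restrict[of ?B n "\<lambda>f. reappearing_count f s m < r"] assms(1) bad_le
    by (simp add: reappearing_count_restrict of_nat_diff diff_divide_distrib)
  ultimately show ?thesis by linarith
qed

lemma exp_minus_one_le_fact:
  assumes "4 \<le> r"
  shows "exp (real r - 1) \<le> fact r"
  using assms
proof (induction r rule: dec_induct)
  case base
  have "exp (3::real) = exp 1 ^ 3" by (simp flip: exp_of_nat_mult)
  also have "\<dots> \<le> (272/100) ^ 3" using e_less_272 by (intro power_mono) auto
  also have "\<dots> \<le> 24" by (simp add: power_divide)
  finally show ?case by (simp add: fact_numeral)
next
  case (step r)
  have "exp (real (Suc r) - 1) = exp (real r - 1) * exp 1" by (simp flip: exp_add)
  also have "\<dots> \<le> fact r * (real r + 1)"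
    using step e_less_272 by (intro mult_mono) auto
  also have "\<dots> = fact (Suc r)" by (simp add: algebra_simps)
  finally show ?case .
qed

lemma inverse_fact_floor_le_exp:
  fixes b :: real
  assumes "3 \<le> b"
  shows "1 / fact (nat \<lfloor>b\<rfloor> + 1) \<le> exp (1 - b)"
proof -
  define r where "r = nat \<lfloor>b\<rfloor> + 1"
  have "b < real r" "4 \<le> r" unfolding r_def using assms by linarith+
  have "exp (b - 1) \<le> exp (real r - 1)" using \<open>b < real r\<close> by simp
  also have "\<dots> \<le> fact r" using \<open>4 \<le> r\<close> by (rule exp_minus_one_le_fact)
  finally have "1 / fact r \<le> 1 / exp (b - 1)" by (intro divide_left_mono) auto
  also have "\<dots> = exp (1 - b)" by (simp add: exp_diff)
  finally show ?thesis unfolding r_def .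
qed

theorem corollary1:
  fixes c :: real and n qbar s :: nat
  assumes "c \<ge> 1" and "n \<ge> 9" and "qbar > 0" and "8 dvd qbar"
    and "real qbar \<le> 4 * sqrt (real n)"
  shows "measure (coord_seq_space n)
           {k \<in> space (coord_seq_space n).
              real (reappearing_count k s (qbar div 4)) \<le> 1 + ln 3 + 2 * c * ln (real n)}
         \<ge> 1 - (1/3) * real n powr (-2 * c)"
proof -
  define m where "m = qbar div 4"
  define b where "b = 1 + ln 3 + 2 * c * ln (real n)"
  have n_pos: "n > 0" using assms(2) by simp
  have "real m \<le> sqrt (real n)" using assms(4,5) unfolding m_def by (elim dvdE) simp
  then have "real m ^ 2 \<le> sqrt (real n) ^ 2" by (intro power_mono) auto
  then have "real m ^ 2 \<le> real n" by simp
  then have mm: "m * m \<le> n" by (simp add: power2_eq_square flip: of_nat_mult)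
  have "1 \<le> ln (real n)" using assms(2) e_less_272 by (subst ln_ge_iff) auto
  then have "1 \<le> c * ln (real n)" using assms(1) mult_mono[of 1 c 1 "ln (real n)"] by simp
  then have "3 \<le> b" unfolding b_def using ln_ge_zero[of 3] by linarith
  then have event_eq: "{k \<in> space (coord_seq_space n). reappearing_count k s m < nat \<lfloor>b\<rfloor> + 1}
      = {k \<in> space (coord_seq_space n). real (reappearing_count k s m) \<le> b}"
    by (intro Collect_cong conj_cong refl) linarith
  have "1 - (1/3) * real n powr (-2 * c) = 1 - exp (1 - b)"
    unfolding b_def using n_pos by (simp add: exp_diff exp_add powr_def exp_minus field_simps)
  also have "\<dots> \<le> 1 - 1 / fact (nat \<lfloor>b\<rfloor> + 1)"
    using inverse_fact_floor_le_exp[OF \<open>3 \<le> b\<close>] by simp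
  also have "\<dots> \<le> measure (coord_seq_space n)
      {k \<in> space (coord_seq_space n). reappearing_count k s m < nat \<lfloor>b\<rfloor> + 1}"
    using n_pos mm by (rule prob_reappearing_count_less)
  finally show ?thesis unfolding m_def[symmetric] b_def[symmetric] event_eq[symmetric] .
qed

end
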